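(* Let $e_1, e_2$ be SLamJS expressions (possibly containing markers and holes) and $n \ge 0$ with $e_1 \dashrightarrow_n e_2$, and let $M \subseteq \mathrm{Marker}$. Then either $\lfloor e_1 \rfloor_M \dashrightarrow_n \lfloor e_2 \rfloor_M$, or the reduction rule applied to derive $e_1 \dashrightarrow_n e_2$ is one of the lift rules (Lift-App, Lift-If, Lift-Unbox, Lift-RunIn, Lift-ReadSel, Lift-ReadRec, Lift-WriteSel, Lift-WriteRec, Lift-DelSel, Lift-DelRec) lifting a marker $\mathfrak m \notin M$.
   Context: **Syntax.** Constants: $k ::= \mathsf{undef}\mid\mathsf{null}\mid\mathsf{true}\mid\mathsf{false}\mid s\mid n$ ($s$ a string, $n$ a number). $x$ ranges over a set $\mathrm{Name}$ of variables and $\mathfrak m$ over a set $\mathrm{Marker}$ of markers. Expressions: $e ::= k \mid \{s_1:e_1,\dots,s_j:e_j\} \mid x \mid \mathsf{fun}(x)\{e\} \mid e(e) \mid \mathsf{box}\,e \mid \mathsf{unbox}\,e \mid \mathsf{run}\,e \mid \mathsf{if}(e)\{e\}\mathsf{else}\{e\} \mid e[e] \mid e[e]=e \mid \mathsf{del}\,e[e] \mid (e,\rho) \mid \mathsf{run}\,e\,\mathsf{in}\,\rho \mid (\mathfrak m : e) \mid \_$, where records have distinct field names, $\_$ is a hole, and environments $\rho$ are finite partial maps from $\mathrm{Name}$ to stage-0 values. Stage-indexed values: $v^0$ includes closures $(\mathsf{fun}(x)\{e\},\rho)$; for every $n\ge0$, $v^n$ includes constants $k$, records $\{s_1:v^n_1,\dots,s_j:v^n_j\}$,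 $\mathsf{box}\,v^{n+1}$, $(\mathfrak m:v^n)$ and $\_$; $v^{n+1}$ also includes $x$, $\mathsf{fun}(x)\{v^{n+1}\}$, $v^{n+1}(v^{n+1})$, $\mathsf{run}\,v^{n+1}$, $\mathsf{if}(v^{n+1})\{v^{n+1}\}\mathsf{else}\{v^{n+1}\}$, $v^{n+1}[v^{n+1}]$, $v^{n+1}[v^{n+1}]=v^{n+1}$, $\mathsf{del}\,v^{n+1}[v^{n+1}]$; $v^{n+2}$ also includes $\mathsf{unbox}\,v^{n+1}$. A value $v$ without superscript is a stage-0 value. Write $\pi$ for the field name string "__proto__". **Top-level reduction** $\dashrightarrow_n$ ($n\ge0$) is the least relation closed under the following rules (rules written with $\dashrightarrow_n$ hold for all $n$). Environment propagation: $(k,\rho)\dashrightarrow_n k$; $(\{\overline{s:e}\},\rho)\dashrightarrow_n\{\overline{s:(e,\rho)}\}$; $(x,\rho)\dashrightarrow_{n+1}x$; $(\mathsf{fun}(x)\{e\},\rho)\dashrightarrow_{n+1}\mathsf{fun}(x)\{(e,\rho)\}$; $(e_1(e_2),\rho)\dashrightarrow_n (e_1,\rho)((e_2,\rho))$; $(\mathsf{box}\,e,\rho)\dashrightarrow_n\mathsf{box}\,(e,\rho)$; $(\mathsf{unbox}\,e,\rho)\dashrightarrow_n\mathsf{unbox}\,(e,\rho)$; $(\mathsf{run}\,e,\rho)\dashrightarrow_0 \mathsf{run}\,(e,\rho)\,\mathsf{in}\,\rho$; $(\mathsf{run}\,e,\rho)\dashrightarrow_{n+1}\mathsf{run}\,(e,\rho)$;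 $(\mathsf{if}(e_1)\{e_2\}\mathsf{else}\{e_3\},\rho)\dashrightarrow_n\mathsf{if}((e_1,\rho))\{(e_2,\rho)\}\mathsf{else}\{(e_3,\rho)\}$; $(e_1[e_2],\rho)\dashrightarrow_n(e_1,\rho)[(e_2,\rho)]$; $(e_1[e_2]=e_3,\rho)\dashrightarrow_n(e_1,\rho)[(e_2,\rho)]=(e_3,\rho)$; $(\mathsf{del}\,e_1[e_2],\rho)\dashrightarrow_n\mathsf{del}\,(e_1,\rho)[(e_2,\rho)]$; $((\mathfrak m:e),\rho)\dashrightarrow_n(\mathfrak m:(e,\rho))$; $(\_,\rho)\dashrightarrow_n\_$. Proper rules: (Lookup) $(x,\rho)\dashrightarrow_0\rho(x)$; (Apply) $(\mathsf{fun}(x)\{e\},\rho)(v)\dashrightarrow_0(e,\rho[x\mapsto v])$; (Unbox) $\mathsf{unbox}\,(\mathsf{box}\,v^1)\dashrightarrow_1 v^1$; (Run) $\mathsf{run}\,(\mathsf{box}\,v^1)\,\mathsf{in}\,\rho\dashrightarrow_0(v^1,\rho)$; (IfTrue) $\mathsf{if}(\mathsf{true})\{e_1\}\mathsf{else}\{e_2\}\dashrightarrow_0 e_1$; (IfFalse) $\mathsf{if}(\mathsf{false})\{e_1\}\mathsf{else}\{e_2\}\dashrightarrow_0 e_2$; (Read1) $\{\overline{s:v},s_i:v_i,\overline{s:v}'\}[s_i]\dashrightarrow_0 v_i$; (Read2) $\{\overline{s:v},\pi:\{\overline{s:v}'\},\overline{s:v}''\}[s_x]\dashrightarrow_0\{\overline{s:v}'\}[s_x]$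 if $s_x\notin\overline s\cup\overline s''$; (Read3) $\{\overline{s:v},\pi:\mathsf{null},\overline{s:v}''\}[s_x]\dashrightarrow_0\mathsf{undef}$ if $s_x\notin\overline s\cup\overline s''$; (Write1) $\{\overline{s:v},s_i:v_i,\overline{s:v}'\}[s_i]=v_i'\dashrightarrow_0\{\overline{s:v},s_i:v_i',\overline{s:v}'\}$; (Write2) $\{\overline{s:v}\}[s_x]=v_x\dashrightarrow_0\{\overline{s:v},s_x:v_x\}$ if $s_x\notin\overline s$; (Del1) $\mathsf{del}\,\{\overline{s:v},s_i:v_i,\overline{s:v}'\}[s_i]\dashrightarrow_0\{\overline{s:v},\overline{s:v}'\}$; (Del2) $\mathsf{del}\,\{\overline{s:v}\}[s_x]\dashrightarrow_0\{\overline{s:v}\}$ if $s_x\notin\overline s$. Lift rules: (Lift-App) $((\mathfrak m:e),\rho)(v)\dashrightarrow_0(\mathfrak m:((e,\rho)(v)))$; (Lift-If) $\mathsf{if}((\mathfrak m:v))\{e_1\}\mathsf{else}\{e_2\}\dashrightarrow_0(\mathfrak m:\mathsf{if}(v)\{e_1\}\mathsf{else}\{e_2\})$; (Lift-Unbox) $\mathsf{unbox}\,(\mathfrak m:v)\dashrightarrow_1(\mathfrak m:\mathsf{unbox}\,v)$; (Lift-RunIn) $\mathsf{run}\,(\mathfrak m:v)\,\mathsf{in}\,\rho\dashrightarrow_0(\mathfrak m:\mathsf{run}\,v\,\mathsf{in}\,\rho)$; (Lift-ReadSel) $v_1[(\mathfrak m:v_2)]\dashrightarrow_0(\mathfrak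 m:v_1[v_2])$; (Lift-ReadRec) $(\mathfrak m:v_1)[v_2]\dashrightarrow_0(\mathfrak m:v_1[v_2])$; (Lift-WriteSel) $v_1[(\mathfrak m:v_2)]=v_3\dashrightarrow_0(\mathfrak m:v_1[v_2]=v_3)$; (Lift-WriteRec) $(\mathfrak m:v_1)[v_2]=v_3\dashrightarrow_0(\mathfrak m:v_1[v_2]=v_3)$; (Lift-DelSel) $\mathsf{del}\,v_1[(\mathfrak m:v_2)]\dashrightarrow_0(\mathfrak m:\mathsf{del}\,v_1[v_2])$; (Lift-DelRec) $\mathsf{del}\,(\mathfrak m:v_1)[v_2]\dashrightarrow_0(\mathfrak m:\mathsf{del}\,v_1[v_2])$. **Erasure.** For $M\subseteq\mathrm{Marker}$, $\lfloor e\rfloor_M$ is defined homomorphically on all constructs (including inside environments, $\lfloor\rho\rfloor_M(x)=\lfloor\rho(x)\rfloor_M$, and $\lfloor\_\rfloor_M=\_$), with $\lfloor(\mathfrak m:e)\rfloor_M=(\mathfrak m:\lfloor e\rfloor_M)$ if $\mathfrak m\in M$ and $\lfloor(\mathfrak m:e)\rfloor_M=\_$ if $\mathfrak m\notin M$. *)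

theory Defs
  imports Complex_Main "HOL-Library.Finite_Map"
begin

datatype const = Undef | Null | CTrue | CFalse | Str string | Num real

datatype ('x, 'm) expr =
    Const const
  | Rec "(string \<times> ('x, 'm) expr) list"
  | Var 'x
  | Fun 'x "('x, 'm) expr"
  | App "('x, 'm) expr" "('x, 'm) expr"
  | Box "('x, 'm) expr"
  | Unbox "('x, 'm) expr"
  | Run "('x, 'm) expr"
  | If "('x, 'm) expr" "('x, 'm) expr" "('x, 'm) expr"
  | Read "('x, 'm) expr" "('x, 'm) expr"
  | Write "('x, 'm) expr" "('x, 'm) expr" "('x, 'm) expr"
  | Del "('x, 'm) expr" "('x, 'm) expr"
  | Clo "('x, 'm) expr" "('x, ('x, 'm) expr) fmap"
  | RunIn "('x, 'm) expr" "('x, ('x, 'm) expr) fmap"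
  | Mark 'm "('x, 'm) expr"
  | Hole

definition proto :: string where "proto = ''__proto__''"

inductive val :: "nat \<Rightarrow> ('x, 'm) expr \<Rightarrow> bool" where
  v_clo: "val 0 (Clo (Fun x e) \<rho>)"
| v_const: "val n (Const k)"
| v_rec: "(\<forall>p\<in>set fs. val n (snd p)) \<Longrightarrow> val n (Rec fs)"
| v_box: "val (Suc n) v \<Longrightarrow> val n (Box v)"
| v_mark: "val n v \<Longrightarrow> val n (Mark m v)"
| v_hole: "val n Hole"
| v_var: "val (Suc n) (Var x)"
| v_fun: "val (Suc n) v \<Longrightarrow> val (Suc n) (Fun x v)"
| v_app: "val (Suc n) v1 \<Longrightarrow> val (Suc n) v2 \<Longrightarrow> val (Suc n) (App v1 v2)"
| v_run: "val (Suc n) v \<Longrightarrow> val (Suc n) (Run v)"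
| v_if: "val (Suc n) v1 \<Longrightarrow> val (Suc n) v2 \<Longrightarrow> val (Suc n) v3 \<Longrightarrow> val (Suc n) (If v1 v2 v3)"
| v_read: "val (Suc n) v1 \<Longrightarrow> val (Suc n) v2 \<Longrightarrow> val (Suc n) (Read v1 v2)"
| v_write: "val (Suc n) v1 \<Longrightarrow> val (Suc n) v2 \<Longrightarrow> val (Suc n) v3 \<Longrightarrow> val (Suc n) (Write v1 v2 v3)"
| v_del: "val (Suc n) v1 \<Longrightarrow> val (Suc n) v2 \<Longrightarrow> val (Suc n) (Del v1 v2)"
| v_unbox: "val (Suc n) v \<Longrightarrow> val (Suc (Suc n)) (Unbox v)"

inductive wf_expr :: "('x, 'm) expr \<Rightarrow> bool" where
  wf_const: "wf_expr (Const k)"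
| wf_rec: "distinct (map fst fs) \<Longrightarrow> (\<forall>p\<in>set fs. wf_expr (snd p)) \<Longrightarrow> wf_expr (Rec fs)"
| wf_var: "wf_expr (Var x)"
| wf_fun: "wf_expr e \<Longrightarrow> wf_expr (Fun x e)"
| wf_app: "wf_expr e1 \<Longrightarrow> wf_expr e2 \<Longrightarrow> wf_expr (App e1 e2)"
| wf_box: "wf_expr e \<Longrightarrow> wf_expr (Box e)"
| wf_unbox: "wf_expr e \<Longrightarrow> wf_expr (Unbox e)"
| wf_run: "wf_expr e \<Longrightarrow> wf_expr (Run e)"
| wf_if: "wf_expr e1 \<Longrightarrow> wf_expr e2 \<Longrightarrow> wf_expr e3 \<Longrightarrow> wf_expr (If e1 e2 e3)"
| wf_read: "wf_expr e1 \<Longrightarrow> wf_expr e2 \<Longrightarrow> wf_expr (Read e1 e2)"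
| wf_write: "wf_expr e1 \<Longrightarrow> wf_expr e2 \<Longrightarrow> wf_expr e3 \<Longrightarrow> wf_expr (Write e1 e2 e3)"
| wf_del: "wf_expr e1 \<Longrightarrow> wf_expr e2 \<Longrightarrow> wf_expr (Del e1 e2)"
| wf_clo: "wf_expr e \<Longrightarrow> (\<forall>x v. fmlookup \<rho> x = Some v \<longrightarrow> val 0 v \<and> wf_expr v)
           \<Longrightarrow> wf_expr (Clo e \<rho>)"
| wf_runin: "wf_expr e \<Longrightarrow> (\<forall>x v. fmlookup \<rho> x = Some v \<longrightarrow> val 0 v \<and> wf_expr v)
           \<Longrightarrow> wf_expr (RunIn e \<rho>)"
| wf_mark: "wf_expr e \<Longrightarrow> wf_expr (Mark m e)"
| wf_hole: "wf_expr Hole"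

primrec erase :: "'m set \<Rightarrow> ('x, 'm) expr \<Rightarrow> ('x, 'm) expr" where
  "erase M (Const k) = Const k"
| "erase M (Rec fs) = Rec (map (map_prod id (erase M)) fs)"
| "erase M (Var x) = Var x"
| "erase M (Fun x e) = Fun x (erase M e)"
| "erase M (App e1 e2) = App (erase M e1) (erase M e2)"
| "erase M (Box e) = Box (erase M e)"
| "erase M (Unbox e) = Unbox (erase M e)"
| "erase M (Run e) = Run (erase M e)"
| "erase M (If e1 e2 e3) = If (erase M e1) (erase M e2) (erase M e3)"
| "erase M (Read e1 e2) = Read (erase M e1) (erase M e2)"
| "erase M (Write e1 e2 e3) = Write (erase M e1) (erase M e2) (erase M e3)"
| "erase M (Del e1 e2) = Del (erase M e1) (erase M e2)"
| "erase M (Clo e \<rho>) = Clo (erase M e) (fmmap (erase M) \<rho>)"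
| "erase M (RunIn e \<rho>) = RunIn (erase M e) (fmmap (erase M) \<rho>)"
| "erase M (Mark m e) = (if m \<in> M then Mark m (erase M e) else Hole)"
| "erase M Hole = Hole"

datatype 'm rule =
    E_Const | E_Rec | E_Var | E_Fun | E_App | E_Box | E_Unbox | E_Run0 | E_RunS
  | E_If | E_Read | E_Write | E_Del | E_Mark | E_Hole
  | R_Lookup | R_Apply | R_Unbox | R_Run | R_IfTrue | R_IfFalse
  | R_Read1 | R_Read2 | R_Read3 | R_Write1 | R_Write2 | R_Del1 | R_Del2
  | Lift_App 'm | Lift_If 'm | Lift_Unbox 'm | Lift_RunIn 'm
  | Lift_ReadSel 'm | Lift_ReadRec 'm | Lift_WriteSel 'm | Lift_WriteRec 'm
  | Lift_DelSel 'm | Lift_DelRec 'm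

abbreviation vals0 :: "(string \<times> ('x, 'm) expr) list \<Rightarrow> bool" where
  "vals0 fs \<equiv> (\<forall>p\<in>set fs. val 0 (snd p))"

inductive red :: "'m rule \<Rightarrow> nat \<Rightarrow> ('x, 'm) expr \<Rightarrow> ('x, 'm) expr \<Rightarrow> bool" where
  e_const: "red E_Const n (Clo (Const k) \<rho>) (Const k)"
| e_rec: "red E_Rec n (Clo (Rec fs) \<rho>) (Rec (map (\<lambda>(s, e). (s, Clo e \<rho>)) fs))"
| e_var: "red E_Var (Suc n) (Clo (Var x) \<rho>) (Var x)"
| e_fun: "red E_Fun (Suc n) (Clo (Fun x e) \<rho>) (Fun x (Clo e \<rho>))"
| e_app: "red E_App n (Clo (App e1 e2) \<rho>) (App (Clo e1 \<rho>) (Clo e2 \<rho>))"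
| e_box: "red E_Box n (Clo (Box e) \<rho>) (Box (Clo e \<rho>))"
| e_unbox: "red E_Unbox n (Clo (Unbox e) \<rho>) (Unbox (Clo e \<rho>))"
| e_run0: "red E_Run0 0 (Clo (Run e) \<rho>) (RunIn (Clo e \<rho>) \<rho>)"
| e_runS: "red E_RunS (Suc n) (Clo (Run e) \<rho>) (Run (Clo e \<rho>))"
| e_if: "red E_If n (Clo (If e1 e2 e3) \<rho>) (If (Clo e1 \<rho>) (Clo e2 \<rho>) (Clo e3 \<rho>))"
| e_read: "red E_Read n (Clo (Read e1 e2) \<rho>) (Read (Clo e1 \<rho>) (Clo e2 \<rho>))"
| e_write: "red E_Write n (Clo (Write e1 e2 e3) \<rho>) (Write (Clo e1 \<rho>) (Clo e2 \<rho>) (Clo e3 \<rho>))"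
| e_del: "red E_Del n (Clo (Del e1 e2) \<rho>) (Del (Clo e1 \<rho>) (Clo e2 \<rho>))"
| e_mark: "red E_Mark n (Clo (Mark m e) \<rho>) (Mark m (Clo e \<rho>))"
| e_hole: "red E_Hole n (Clo Hole \<rho>) Hole"
| r_lookup: "fmlookup \<rho> x = Some v \<Longrightarrow> red R_Lookup 0 (Clo (Var x) \<rho>) v"
| r_apply: "val 0 v \<Longrightarrow> red R_Apply 0 (App (Clo (Fun x e) \<rho>) v) (Clo e (fmupd x v \<rho>))"
| r_unbox: "val 1 v \<Longrightarrow> red R_Unbox 1 (Unbox (Box v)) v"
| r_run: "val 1 v \<Longrightarrow> red R_Run 0 (RunIn (Box v) \<rho>) (Clo v \<rho>)"
| r_iftrue: "red R_IfTrue 0 (If (Const CTrue) e1 e2) e1"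
| r_iffalse: "red R_IfFalse 0 (If (Const CFalse) e1 e2) e2"
| r_read1: "vals0 (xs @ (s, v) # ys) \<Longrightarrow>
    red R_Read1 0 (Read (Rec (xs @ (s, v) # ys)) (Const (Str s))) v"
| r_read2: "vals0 xs \<Longrightarrow> vals0 zs \<Longrightarrow> vals0 ys \<Longrightarrow>
    s \<notin> fst ` set xs \<union> fst ` set ys \<Longrightarrow>
    red R_Read2 0 (Read (Rec (xs @ (proto, Rec zs) # ys)) (Const (Str s)))
                  (Read (Rec zs) (Const (Str s)))"
| r_read3: "vals0 xs \<Longrightarrow> vals0 ys \<Longrightarrow>
    s \<notin> fst ` set xs \<union> fst ` set ys \<Longrightarrow>
    red R_Read3 0 (Read (Rec (xs @ (proto, Const Null) # ys)) (Const (Str s))) (Const Undef)"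
| r_write1: "vals0 (xs @ (s, v) # ys) \<Longrightarrow> val 0 v' \<Longrightarrow>
    red R_Write1 0 (Write (Rec (xs @ (s, v) # ys)) (Const (Str s)) v') (Rec (xs @ (s, v') # ys))"
| r_write2: "vals0 fs \<Longrightarrow> val 0 v \<Longrightarrow> s \<notin> fst ` set fs \<Longrightarrow>
    red R_Write2 0 (Write (Rec fs) (Const (Str s)) v) (Rec (fs @ [(s, v)]))"
| r_del1: "vals0 (xs @ (s, v) # ys) \<Longrightarrow>
    red R_Del1 0 (Del (Rec (xs @ (s, v) # ys)) (Const (Str s))) (Rec (xs @ ys))"
| r_del2: "vals0 fs \<Longrightarrow> s \<notin> fst ` set fs \<Longrightarrow>
    red R_Del2 0 (Del (Rec fs) (Const (Str s))) (Rec fs)"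
| l_app: "val 0 v \<Longrightarrow> red (Lift_App m) 0 (App (Clo (Mark m e) \<rho>) v) (Mark m (App (Clo e \<rho>) v))"
| l_if: "val 0 v \<Longrightarrow> red (Lift_If m) 0 (If (Mark m v) e1 e2) (Mark m (If v e1 e2))"
| l_unbox: "val 0 v \<Longrightarrow> red (Lift_Unbox m) 1 (Unbox (Mark m v)) (Mark m (Unbox v))"
| l_runin: "val 0 v \<Longrightarrow> red (Lift_RunIn m) 0 (RunIn (Mark m v) \<rho>) (Mark m (RunIn v \<rho>))"
| l_readsel: "val 0 v1 \<Longrightarrow> val 0 v2 \<Longrightarrow>
    red (Lift_ReadSel m) 0 (Read v1 (Mark m v2)) (Mark m (Read v1 v2))"
| l_readrec: "val 0 v1 \<Longrightarrow> val 0 v2 \<Longrightarrow>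
    red (Lift_ReadRec m) 0 (Read (Mark m v1) v2) (Mark m (Read v1 v2))"
| l_writesel: "val 0 v1 \<Longrightarrow> val 0 v2 \<Longrightarrow> val 0 v3 \<Longrightarrow>
    red (Lift_WriteSel m) 0 (Write v1 (Mark m v2) v3) (Mark m (Write v1 v2 v3))"
| l_writerec: "val 0 v1 \<Longrightarrow> val 0 v2 \<Longrightarrow> val 0 v3 \<Longrightarrow>
    red (Lift_WriteRec m) 0 (Write (Mark m v1) v2 v3) (Mark m (Write v1 v2 v3))"
| l_delsel: "val 0 v1 \<Longrightarrow> val 0 v2 \<Longrightarrow>
    red (Lift_DelSel m) 0 (Del v1 (Mark m v2)) (Mark m (Del v1 v2))"
| l_delrec: "val 0 v1 \<Longrightarrow> val 0 v2 \<Longrightarrow>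
    red (Lift_DelRec m) 0 (Del (Mark m v1) v2) (Mark m (Del v1 v2))"

definition reduces :: "nat \<Rightarrow> ('x, 'm) expr \<Rightarrow> ('x, 'm) expr \<Rightarrow> bool" where
  "reduces n e1 e2 \<longleftrightarrow> (\<exists>r. red r n e1 e2)"

definition lift_rules :: "'m \<Rightarrow> 'm rule set" where
  "lift_rules m = {Lift_App m, Lift_If m, Lift_Unbox m, Lift_RunIn m, Lift_ReadSel m,
     Lift_ReadRec m, Lift_WriteSel m, Lift_WriteRec m, Lift_DelSel m, Lift_DelRec m}"

end

theory Submission
  imports Defs
begin

text \<open>Erasure is a homomorphism that maps stage-n values to stage-n values, so it commutes
  with environment lookup and update and with the record operations; hence every rule
  instance survives erasure, though not always as an instance of the same rule: propagating
  an environment into a marker outside M becomes propagation into a hole. A lift rule for a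
  marker outside M does not survive: its right-hand side erases to a hole while its
  left-hand side does not.\<close>

lemma val_erase: "val n v \<Longrightarrow> val n (erase M v)"
proof (induction rule: val.induct)
  case (v_rec fs n)
  then show ?case by (auto intro!: val.v_rec) (metis snd_conv)
qed (auto intro: val.intros)

lemma vals_erase:
  "\<forall>p\<in>set fs. val n (snd p) \<Longrightarrow> \<forall>p\<in>set (map (map_prod id (erase M)) fs). val n (snd p)"
  by (auto intro: val_erase)

lemma vals_erase_append_Cons:
  "\<forall>p\<in>set (xs @ (s, v) # ys). val n (snd p) \<Longrightarrow>
   \<forall>p\<in>set (map (map_prod id (erase M)) xs @ (s, erase M v) # map (map_prod id (erase M)) ys).
     val n (snd p)"
  using vals_erase[of "xs @ (s, v) # ys" n M] by simp

lemma fst_image_map_prod_id [simp]: "fst ` map_prod id f ` A = fst ` A"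
  by (simp add: image_image)

lemma red_erase:
  assumes "red r n e1 e2" and "\<And>m. m \<notin> M \<Longrightarrow> r \<notin> lift_rules m"
  shows "reduces n (erase M e1) (erase M e2)"
  using assms
proof (induction rule: red.induct)
  case (e_rec n fs \<rho>)
  have "map (\<lambda>(s, e). (s, Clo e (fmmap (erase M) \<rho>))) (map (map_prod id (erase M)) fs)
      = map (map_prod id (erase M)) (map (\<lambda>(s, e). (s, Clo e \<rho>)) fs)"
    by auto
  with red.e_rec[of n "map (map_prod id (erase M)) fs" "fmmap (erase M) \<rho>"]
  show ?case unfolding reduces_def erase.simps by metis
next
  case (r_lookup \<rho> x v)
  then have "fmlookup (fmmap (erase M) \<rho>) x = Some (erase M v)" by simp
  from red.r_lookup[OF this] show ?case by (auto simp: reduces_def)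
next
  case (r_apply v x e \<rho>)
  from red.r_apply[OF val_erase[OF r_apply(1)], of x "erase M e" "fmmap (erase M) \<rho>"]
  show ?case by (auto simp: reduces_def fmmap_fmupd)
next
  case (r_read1 xs s v ys)
  from red.r_read1[OF vals_erase_append_Cons[OF r_read1(1)]] show ?case by (auto simp: reduces_def)
next
  case (r_read2 xs zs ys s)
  from red.r_read2[OF vals_erase[where M=M, OF r_read2(1)]
      vals_erase[where M=M, OF r_read2(2)] vals_erase[where M=M, OF r_read2(3)]] r_read2(4)
  show ?case by (auto simp: reduces_def)
next
  case (r_read3 xs ys s)
  from red.r_read3[OF vals_erase[where M=M, OF r_read3(1)]
      vals_erase[where M=M, OF r_read3(2)]] r_read3(3)
  show ?case by (auto simp: reduces_def)
next
  case (r_write1 xs s v ys v')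
  from red.r_write1[OF vals_erase_append_Cons[OF r_write1(1)] val_erase[OF r_write1(2)]]
  show ?case by (auto simp: reduces_def)
next
  case (r_write2 fs v s)
  from red.r_write2[OF vals_erase[where M=M, OF r_write2(1)]
      val_erase[where M=M, OF r_write2(2)]] r_write2(3)
  show ?case by (auto simp: reduces_def)
next
  case (r_del1 xs s v ys)
  from red.r_del1[OF vals_erase_append_Cons[OF r_del1(1)]] show ?case by (auto simp: reduces_def)
next
  case (r_del2 fs s)
  from red.r_del2[OF vals_erase[where M=M, OF r_del2(1)]] r_del2(2)
  show ?case by (auto simp: reduces_def)
qed (auto simp: reduces_def lift_rules_def intro: red.intros val_erase
   red.r_unbox[simplified] red.r_run[simplified] red.l_unbox[simplified]
   val_erase[where n=1, simplified])

theorem lemma1: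
  fixes e1 e2 :: "('x, 'm) expr" and M :: "'m set" and n :: nat and r :: "'m rule"
  assumes "wf_expr e1"
    and "red r n e1 e2"
  shows "reduces n (erase M e1) (erase M e2) \<or> (\<exists>m. m \<notin> M \<and> r \<in> lift_rules m)"
  using red_erase[OF assms(2)] by blast

end
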